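(* There is a partial order $(P,\leq_P)$, with first, second and third levels $P_1,P_2,P_3$, such that: (1) $P$ is locally countable, has size continuum and has height three; (2) $P_1$ has size continuum; (3) every countable subset of $P_1$ has an upper bound in $P_2$; (4) for every finite subset $Q$ of $P_1\cup P_2$ and every $q\in P_2$ not equal to any element of $Q$, there is an element of $P_3$ which is above every element of $Q$ but not above $q$.
   Context: A partial order is locally countable if every element has at most countably many strict predecessors; it has height $n$ if its longest chain has length exactly $n$. For a partial order of height three, the first level consists of elements with no strict predecessors, the second level of elements not in the first level whose strict predecessors all lie in the first level, and the third level of the remaining elements (those not in the first two levels, all of whose strict predecessors lie in the first two levels). *)

theory Defs
  imports Complex_Main "HOL-Library.Countable_Set" "HOL-Library.Equipollence"
begin

definition strict_preds :: "'a set \<Rightarrow> 'a rel \<Rightarrow> 'a \<Rightarrow> 'a set" where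
  "strict_preds P r x = {y \<in> P. (y, x) \<in> r \<and> y \<noteq> x}"

definition locally_countable :: "'a set \<Rightarrow> 'a rel \<Rightarrow> bool" where
  "locally_countable P r \<longleftrightarrow> (\<forall>x\<in>P. countable (strict_preds P r x))"

definition is_chain :: "'a set \<Rightarrow> 'a rel \<Rightarrow> 'a set \<Rightarrow> bool" where
  "is_chain P r C \<longleftrightarrow> C \<subseteq> P \<and> (\<forall>x\<in>C. \<forall>y\<in>C. (x, y) \<in> r \<or> (y, x) \<in> r)"

definition has_height :: "'a set \<Rightarrow> 'a rel \<Rightarrow> nat \<Rightarrow> bool" where
  "has_height P r n \<longleftrightarrow>
     (\<exists>C. is_chain P r C \<and> finite C \<and> card C = n) \<and>
     (\<forall>C. is_chain P r C \<longrightarrow> finite C \<and> card C \<le> n)"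

definition level1 :: "'a set \<Rightarrow> 'a rel \<Rightarrow> 'a set" where
  "level1 P r = {x \<in> P. strict_preds P r x = {}}"

definition level2 :: "'a set \<Rightarrow> 'a rel \<Rightarrow> 'a set" where
  "level2 P r = {x \<in> P - level1 P r. strict_preds P r x \<subseteq> level1 P r}"

definition level3 :: "'a set \<Rightarrow> 'a rel \<Rightarrow> 'a set" where
  "level3 P r = {x \<in> P - (level1 P r \<union> level2 P r).
                   strict_preds P r x \<subseteq> level1 P r \<union> level2 P r}"

end

theory Submission
  imports Defs "HOL-Analysis.Abstract_Topology_2"
begin

text \<open>Let level one consist of the subsets of the natural numbers, level two of all
  sequences of such points, a sequence lying above exactly the points it enumerates, and level
  three of all nonempty finite lists of sequences, a list lying above its sequences and their
  points. Every countable set of points is enumerated by one sequence. A finite set \<open>Q\<close> of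
  points and sequences lies below the list made of the sequences in \<open>Q\<close> plus one sequence
  enumerating the points in \<open>Q\<close> that is chosen different from a given sequence \<open>q \<notin> Q\<close>; then
  \<open>q\<close> is not below this list. All predecessor sets are countable, the rank of an element is its
  level, and since there are only continuum many elements the order can be copied onto a set
  of reals along an injection.\<close>

lemma levels_of_rank:
  fixes rank :: "'a \<Rightarrow> nat"
  assumes rank_less: "\<And>x y. x \<in> P \<Longrightarrow> y \<in> strict_preds P r x \<Longrightarrow> rank y < rank x"
    and rank_pred: "\<And>x. x \<in> P \<Longrightarrow> 0 < rank x \<Longrightarrow> \<exists>y\<in>strict_preds P r x. Suc (rank y) = rank x"
  shows "level1 P r = {x\<in>P. rank x = 0}" (is ?L1)
    and "level2 P r = {x\<in>P. rank x = 1}" (is ?L2)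
    and "level3 P r = {x\<in>P. rank x = 2}"
proof -
  have preds_in: "strict_preds P r x \<subseteq> P" for x
    by (auto simp: strict_preds_def)
  show L1: ?L1
    using rank_less rank_pred by (fastforce simp: level1_def)
  show L2: ?L2
    unfolding level2_def L1 using rank_less rank_pred preds_in by fastforce
  show "level3 P r = {x\<in>P. rank x = 2}"
    unfolding level3_def L1 L2 using rank_less rank_pred preds_in by fastforce
qed

lemma chain_finite_card_le_rank_bound:
  fixes rank :: "'a \<Rightarrow> nat"
  assumes chain: "is_chain P r C"
    and rank_less: "\<And>x y. x \<in> P \<Longrightarrow> y \<in> strict_preds P r x \<Longrightarrow> rank y < rank x"
    and rank_bound: "\<And>x. x \<in> P \<Longrightarrow> rank x < n"
  shows "finite C \<and> card C \<le> n"
proof -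
  have "inj_on rank C"
  proof (rule inj_onI)
    fix x y assume xy: "x \<in> C" "y \<in> C" "rank x = rank y"
    show "x = y"
    proof (rule ccontr)
      assume "x \<noteq> y"
      with chain xy have "x \<in> strict_preds P r y \<or> y \<in> strict_preds P r x"
        by (auto simp: is_chain_def strict_preds_def)
      with chain xy rank_less show False
        by (fastforce simp: is_chain_def)
    qed
  qed
  moreover have "rank ` C \<subseteq> {..<n}"
    using chain rank_bound by (auto simp: is_chain_def)
  ultimately have "C \<lesssim> {..<n}"
    unfolding lepoll_def by blast
  then show ?thesis
    by (simp add: lepoll_iff_finite_card)
qed

lemma superset_eqpoll_UNIV:
  fixes X Y :: "'a set"
  assumes "X \<approx> (UNIV :: 'a set)" and "X \<subseteq> Y"
  shows "Y \<approx> (UNIV :: 'a set)"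
proof (rule lepoll_antisym)
  show "Y \<lesssim> (UNIV :: 'a set)"
    by (rule subset_imp_lepoll) simp
  show "(UNIV :: 'a set) \<lesssim> Y"
    using assms by (meson eqpoll_sym lepoll_trans1 subset_imp_lepoll)
qed

lemma pair_in_map_prod_image_iff [simp]:
  "inj f \<Longrightarrow> (f a, f b) \<in> map_prod f f ` r \<longleftrightarrow> (a, b) \<in> r"
  using inj_image_mem_iff[OF prod.inj_map, of f f "(a, b)" r] by simp

lemma strict_preds_image:
  assumes "inj f"
  shows "strict_preds (range f) (map_prod f f ` r) (f a) = f ` strict_preds UNIV r a"
  using assms unfolding strict_preds_def by (auto simp: inj_eq)

lemma level1_image:
  "inj f \<Longrightarrow> level1 (range f) (map_prod f f ` r) = f ` level1 UNIV r"
  by (auto simp: level1_def strict_preds_image)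

lemma level2_image:
  "inj f \<Longrightarrow> level2 (range f) (map_prod f f ` r) = f ` level2 UNIV r"
  by (fastforce simp: level2_def level1_image strict_preds_image inj_eq)

lemma level3_image:
  "inj f \<Longrightarrow> level3 (range f) (map_prod f f ` r) = f ` level3 UNIV r"
  by (fastforce simp: level3_def level1_image level2_image strict_preds_image inj_eq)

lemma partial_order_on_image:
  assumes "inj f" and "partial_order_on UNIV r"
  shows "partial_order_on (range f) (map_prod f f ` r)"
  using assms unfolding partial_order_on_def preorder_on_def refl_on_def trans_def antisym_def
  by (auto simp: inj_eq)

lemma locally_countable_image:
  "inj f \<Longrightarrow> locally_countable UNIV r \<Longrightarrow> locally_countable (range f) (map_prod f f ` r)"
  by (auto simp: locally_countable_def strict_preds_image)

lemma is_chain_image_iff: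
  "inj f \<Longrightarrow> is_chain (range f) (map_prod f f ` r) (f ` C) \<longleftrightarrow> is_chain UNIV r C"
  by (auto simp: is_chain_def)

lemma has_height_image:
  assumes f: "inj f" and height: "has_height UNIV r n"
  shows "has_height (range f) (map_prod f f ` r) n"
proof -
  have card_image_f: "card (f ` C) = card C" for C
    using f by (simp add: card_image inj_on_subset)
  have "finite C \<and> card C \<le> n" if chain: "is_chain (range f) (map_prod f f ` r) C" for C
  proof -
    have C: "C = f ` (f -` C)"
      using chain by (auto simp: is_chain_def)
    then have "is_chain UNIV r (f -` C)"
      using chain is_chain_image_iff[OF f] by metis
    then show ?thesis
      using height C card_image_f unfolding has_height_def by (metis finite_imageI)
  qed
  then show ?thesis
    using height is_chain_image_iff[OF f] card_image_f unfolding has_height_def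
    by (metis finite_imageI)
qed

lemma countable_level1_bounded_image:
  assumes f: "inj f"
    and bounded: "\<forall>A. A \<subseteq> level1 UNIV r \<and> countable A \<longrightarrow> (\<exists>u\<in>level2 UNIV r. \<forall>a\<in>A. (a, u) \<in> r)"
  shows "\<forall>A. A \<subseteq> level1 (range f) (map_prod f f ` r) \<and> countable A \<longrightarrow>
           (\<exists>u\<in>level2 (range f) (map_prod f f ` r). \<forall>a\<in>A. (a, u) \<in> map_prod f f ` r)"
proof (intro allI impI)
  fix A assume A: "A \<subseteq> level1 (range f) (map_prod f f ` r) \<and> countable A"
  then have A_sub: "A \<subseteq> f ` level1 UNIV r"
    by (simp add: level1_image[OF f])
  then have A_image: "A = f ` (f -` A)"
    by blast
  have "f -` A \<subseteq> level1 UNIV r"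
    using vimage_mono[OF A_sub, of f] inj_vimage_image_eq[OF f] by simp
  moreover have "countable (f -` A)"
    using A A_image f by (metis countable_image_inj_on inj_on_subset subset_UNIV)
  ultimately obtain u where u: "u \<in> level2 UNIV r" "\<forall>a\<in>f -` A. (a, u) \<in> r"
    using bounded by blast
  have "\<forall>a\<in>A. (a, f u) \<in> map_prod f f ` r"
    using u(2) f by (subst A_image) auto
  then show "\<exists>u\<in>level2 (range f) (map_prod f f ` r). \<forall>a\<in>A. (a, u) \<in> map_prod f f ` r"
    using u(1) by (intro bexI[of _ "f u"]) (simp_all add: level2_image[OF f])
qed

lemma finite_separation_image:
  assumes f: "inj f"
    and separation: "\<forall>Q q. finite Q \<and> Q \<subseteq> level1 UNIV r \<union> level2 UNIV r \<and> q \<in> level2 UNIV r \<and> q \<notin> Q \<longrightarrow>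
          (\<exists>z\<in>level3 UNIV r. (\<forall>x\<in>Q. (x, z) \<in> r) \<and> (q, z) \<notin> r)"
  shows "\<forall>Q q. finite Q \<and> Q \<subseteq> level1 (range f) (map_prod f f ` r) \<union> level2 (range f) (map_prod f f ` r)
           \<and> q \<in> level2 (range f) (map_prod f f ` r) \<and> q \<notin> Q \<longrightarrow>
          (\<exists>z\<in>level3 (range f) (map_prod f f ` r).
             (\<forall>x\<in>Q. (x, z) \<in> map_prod f f ` r) \<and> (q, z) \<notin> map_prod f f ` r)"
proof (intro allI impI)
  fix Q q
  assume Qq: "finite Q \<and> Q \<subseteq> level1 (range f) (map_prod f f ` r) \<union> level2 (range f) (map_prod f f ` r)
    \<and> q \<in> level2 (range f) (map_prod f f ` r) \<and> q \<notin> Q"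
  then have Q_sub: "Q \<subseteq> f ` (level1 UNIV r \<union> level2 UNIV r)"
    by (simp add: level1_image[OF f] level2_image[OF f] image_Un)
  then have Q_image: "Q = f ` (f -` Q)"
    by blast
  have "f -` Q \<subseteq> level1 UNIV r \<union> level2 UNIV r"
    using vimage_mono[OF Q_sub, of f] inj_vimage_image_eq[OF f] by simp
  moreover obtain p where q: "q = f p" "p \<in> level2 UNIV r"
    using Qq by (auto simp: level2_image[OF f])
  moreover have "finite (f -` Q)" "p \<notin> f -` Q"
    using Qq q f by (auto intro: finite_vimageI)
  ultimately obtain z where z: "z \<in> level3 UNIV r" "\<forall>x\<in>f -` Q. (x, z) \<in> r" "(p, z) \<notin> r"
    using separation by blast
  have "\<forall>x\<in>Q. (x, f z) \<in> map_prod f f ` r"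
    using z(2) f by (subst Q_image) auto
  then show "\<exists>z\<in>level3 (range f) (map_prod f f ` r).
      (\<forall>x\<in>Q. (x, z) \<in> map_prod f f ` r) \<and> (q, z) \<notin> map_prod f f ` r"
    using z(1,3) q(1) f by (intro bexI[of _ "f z"]) (simp_all add: level3_image)
qed

text \<open>\<open>Top\<close> takes a nonempty list, so that every top element lies above some sequence and
  hence on level three.\<close>

datatype 'a node = Point 'a | Seq "nat \<Rightarrow> 'a" | Top "nat \<Rightarrow> 'a" "(nat \<Rightarrow> 'a) list"

fun node_less :: "'a node \<Rightarrow> 'a node \<Rightarrow> bool" where
  "node_less (Point a) (Seq f) \<longleftrightarrow> a \<in> range f"
| "node_less (Point a) (Top h hs) \<longleftrightarrow> (\<exists>g\<in>set (h # hs). a \<in> range g)"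
| "node_less (Seq f) (Top h hs) \<longleftrightarrow> f \<in> set (h # hs)"
| "node_less _ _ \<longleftrightarrow> False"

definition node_le :: "'a node rel" where
  "node_le = {(x, y). x = y \<or> node_less x y}"

fun node_rank :: "'a node \<Rightarrow> nat" where
  "node_rank (Point _) = 0"
| "node_rank (Seq _) = 1"
| "node_rank (Top _ _) = 2"

lemma node_le_iff: "(x, y) \<in> node_le \<longleftrightarrow> x = y \<or> node_less x y"
  by (simp add: node_le_def)

lemma node_less_rank: "node_less x y \<Longrightarrow> node_rank x < node_rank y"
  by (induction x y rule: node_less.induct) auto

lemma strict_preds_node_le: "strict_preds UNIV node_le y = {x. node_less x y}"
  using node_less_rank by (fastforce simp: strict_preds_def node_le_iff)

lemma node_less_trans: "node_less x y \<Longrightarrow> node_less y z \<Longrightarrow> node_less x z"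
  by (induction x y rule: node_less.induct; cases z) auto

lemma node_less_asym: "node_less x y \<Longrightarrow> \<not> node_less y x"
  by (metis node_less_rank less_asym)

lemma node_partial_order: "partial_order_on UNIV node_le"
  unfolding partial_order_on_def preorder_on_def refl_on_def trans_def antisym_def node_le_iff
  by (auto intro: node_less_trans dest: node_less_asym)

lemma node_levels:
  "level1 UNIV (node_le :: 'a node rel) = {x. node_rank x = 0}"
  "level2 UNIV (node_le :: 'a node rel) = {x. node_rank x = 1}"
  "level3 UNIV (node_le :: 'a node rel) = {x. node_rank x = 2}"
proof -
  have rank_pred: "\<exists>y\<in>strict_preds UNIV node_le x. Suc (node_rank y) = node_rank x"
    if "0 < node_rank x" for x :: "'a node"
  proof (cases x)
    case (Seq f)
    then show ?thesis by (intro bexI[of _ "Point (f 0)"]) (auto simp: strict_preds_node_le)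
  next
    case (Top h hs)
    then show ?thesis by (intro bexI[of _ "Seq h"]) (auto simp: strict_preds_node_le)
  qed (use that in simp)
  have rank_less: "node_rank y < node_rank x" if "y \<in> strict_preds UNIV node_le x" for x y :: "'a node"
    using that node_less_rank by (simp add: strict_preds_node_le)
  show "level1 UNIV (node_le :: 'a node rel) = {x. node_rank x = 0}"
    "level2 UNIV (node_le :: 'a node rel) = {x. node_rank x = 1}"
    "level3 UNIV (node_le :: 'a node rel) = {x. node_rank x = 2}"
    using levels_of_rank[of UNIV node_le node_rank, OF rank_less rank_pred] by simp_all
qed

lemma node_less_Seq_eq: "{x. node_less x (Seq f)} = Point ` range f"
  by (auto elim: node_less.elims)

lemma node_less_Top_eq:
  "{x. node_less x (Top h hs)} = Point ` (\<Union>g\<in>set (h # hs). range g) \<union> Seq ` set (h # hs)"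
proof -
  have "node_less x (Top h hs) \<longleftrightarrow> x \<in> Point ` (\<Union>g\<in>set (h # hs). range g) \<union> Seq ` set (h # hs)" for x
    by (cases x) auto
  then show ?thesis by blast
qed

lemma node_locally_countable: "locally_countable UNIV node_le"
  unfolding locally_countable_def strict_preds_node_le
proof
  fix y :: "'a node"
  show "countable {x. node_less x y}"
  proof (cases y)
    case (Point a)
    then have "{x. node_less x y} = {}"
      by (auto elim: node_less.elims)
    then show ?thesis by simp
  next
    case (Seq f)
    then show ?thesis by (simp add: node_less_Seq_eq)
  next
    case (Top h hs)
    then show ?thesis
      unfolding Top node_less_Top_eq
      by (intro countable_Un countable_image countable_UN) (auto intro: countable_finite)
  qed
qed

lemma node_height: "has_height UNIV (node_le :: 'a node rel) 3"
  unfolding has_height_def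
proof
  let ?a = "undefined :: 'a"
  show "\<exists>C. is_chain UNIV (node_le :: 'a node rel) C \<and> finite C \<and> card C = 3"
    by (rule exI[of _ "{Point ?a, Seq (\<lambda>_. ?a), Top (\<lambda>_. ?a) []}"])
      (auto simp: is_chain_def node_le_iff)
  have rank_bound: "node_rank x < 3" for x :: "'a node"
    by (cases x) auto
  show "\<forall>C. is_chain UNIV (node_le :: 'a node rel) C \<longrightarrow> finite C \<and> card C \<le> 3"
  proof (intro allI impI)
    fix C assume "is_chain UNIV (node_le :: 'a node rel) C"
    then show "finite C \<and> card C \<le> 3"
      by (rule chain_finite_card_le_rank_bound[where rank = node_rank])
        (simp_all add: strict_preds_node_le node_less_rank rank_bound)
  qed
qed

lemma node_countable_level1_bounded:
  "\<forall>A. A \<subseteq> level1 UNIV node_le \<and> countable A \<longrightarrow> (\<exists>u\<in>level2 UNIV node_le. \<forall>x\<in>A. (x, u) \<in> node_le)"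
proof (intro allI impI)
  fix A :: "'a node set"
  assume A: "A \<subseteq> level1 UNIV node_le \<and> countable A"
  define S where "S = Point -` A"
  have "countable S"
    using A unfolding S_def
    by (metis countable_image_inj_on countable_subset image_vimage_subset inj_onI node.inject(1))
  have "(x, Seq (from_nat_into S)) \<in> node_le" if "x \<in> A" for x
  proof -
    obtain a where "x = Point a"
      using A \<open>x \<in> A\<close> by (cases x) (auto simp: node_levels)
    with \<open>x \<in> A\<close> \<open>countable S\<close> have "a = from_nat_into S (to_nat_on S a)"
      by (simp add: S_def)
    then show ?thesis
      using \<open>x = Point a\<close> by (auto simp: node_le_iff)
  qed
  then show "\<exists>u\<in>level2 UNIV node_le. \<forall>x\<in>A. (x, u) \<in> node_le"
    by (intro bexI[of _ "Seq (from_nat_into S)"]) (auto simp: node_levels)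
qed

text \<open>With a single atom \<open>a\<close> there is only one sequence, and no top element avoids it.\<close>

lemma node_finite_separation:
  assumes "(a :: 'a) \<noteq> b"
  shows "\<forall>Q q. finite Q \<and> Q \<subseteq> level1 UNIV (node_le :: 'a node rel) \<union> level2 UNIV node_le \<and>
            q \<in> level2 UNIV node_le \<and> q \<notin> Q \<longrightarrow>
          (\<exists>z\<in>level3 UNIV node_le. (\<forall>x\<in>Q. (x, z) \<in> node_le) \<and> (q, z) \<notin> node_le)"
proof (intro allI impI)
  fix Q and q :: "'a node"
  assume Qq: "finite Q \<and> Q \<subseteq> level1 UNIV node_le \<union> level2 UNIV node_le \<and>
    q \<in> level2 UNIV node_le \<and> q \<notin> Q"
  then obtain f where q: "q = Seq f"
    by (cases q) (auto simp: node_levels)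
  obtain xs where xs: "set xs = Point -` Q"
    using Qq finite_list finite_vimageI[of Q Point] by (metis inj_onI node.inject(1))
  obtain hs where hs: "set hs = Seq -` Q"
    using Qq finite_list finite_vimageI[of Q Seq] by (metis inj_onI node.inject(2))
  obtain c where c: "c \<noteq> f (length xs)"
    using assms by metis
  define g where "g n = (if n < length xs then xs ! n else c)" for n
  have "g \<noteq> f"
    using c by (auto simp: g_def fun_eq_iff)
  have points: "set xs \<subseteq> range g"
    by (auto simp: in_set_conv_nth g_def)
  have "(x, Top g hs) \<in> node_le" if "x \<in> Q" for x
    using that Qq xs hs points by (cases x) (auto simp: node_le_iff node_levels)
  moreover have "(q, Top g hs) \<notin> node_le"
    using Qq q hs \<open>g \<noteq> f\<close> by (auto simp: node_le_iff)
  ultimately show "\<exists>z\<in>level3 UNIV node_le. (\<forall>x\<in>Q. (x, z) \<in> node_le) \<and> (q, z) \<notin> node_le"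
    by (intro bexI[of _ "Top g hs"]) (auto simp: node_levels)
qed

text \<open>Every code word starts with the rank of the node, and the words \<open>[0]\<close>, \<open>[1]\<close> and
  \<open>[2, length hs]\<close> make the constructor and the length of the list recoverable even when the
  sets involved are empty.\<close>

fun node_code :: "nat set node \<Rightarrow> nat list set" where
  "node_code (Point s) = insert [0] {[0, k] | k. k \<in> s}"
| "node_code (Seq f) = insert [1] {[1, i, k] | i k. k \<in> f i}"
| "node_code (Top h hs) =
     insert [2, length hs] {[2, j, i, k] | j i k. j \<le> length hs \<and> k \<in> ((h # hs) ! j) i}"

lemma inj_node_code: "inj node_code"
proof (rule injI)
  fix x y :: "nat set node"
  assume eq: "node_code x = node_code y"
  then have mem: "l \<in> node_code x \<longleftrightarrow> l \<in> node_code y" for l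
    by simp
  have "hd ` node_code z = {node_rank z}" for z
    by (cases z) auto
  with eq have same_rank: "node_rank x = node_rank y"
    by (metis singleton_inject)
  show "x = y"
  proof (cases x)
    case (Point s)
    with same_rank obtain t where y: "y = Point t"
      by (cases y) auto
    have "k \<in> s \<longleftrightarrow> k \<in> t" for k
      using mem[of "[0, k]"] Point y by simp
    then show ?thesis
      using Point y by blast
  next
    case (Seq f)
    with same_rank obtain g where y: "y = Seq g"
      by (cases y) auto
    have "k \<in> f i \<longleftrightarrow> k \<in> g i" for i k
      using mem[of "[1, i, k]"] Seq y by simp
    then show ?thesis
      using Seq y by blast
  next
    case (Top h hs)
    with same_rank obtain g gs where y: "y = Top g gs"
      by (cases y) auto
    have "length hs = length gs"
      using mem[of "[2, length hs]"] Top y by simp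
    moreover have "k \<in> ((h # hs) ! j) i \<longleftrightarrow> k \<in> ((g # gs) ! j) i" if "j \<le> length hs" for i j k
      using mem[of "[2, j, i, k]"] Top y that \<open>length hs = length gs\<close> by simp
    ultimately have "h # hs = g # gs"
      by (intro nth_equalityI) (auto simp: fun_eq_iff less_Suc_eq_le)
    then show ?thesis
      using Top y by simp
  qed
qed

lemma nat_set_node_embeds_into_real: "\<exists>e :: nat set node \<Rightarrow> real. inj e"
proof -
  obtain b :: "nat set \<Rightarrow> real" where "bij b"
    using nat_sets_eqpoll_reals unfolding eqpoll_def by blast
  moreover have "inj (image (to_nat :: nat list \<Rightarrow> nat))"
    by (rule injI) (simp add: inj_image_eq_iff)
  ultimately have "inj (b \<circ> image to_nat \<circ> node_code)"
    using inj_node_code by (simp add: bij_is_inj inj_compose)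
  then show ?thesis
    by blast
qed

lemma nat_set_node_level1_eqpoll_real: "level1 UNIV (node_le :: nat set node rel) \<approx> (UNIV :: real set)"
proof -
  have "level1 UNIV (node_le :: nat set node rel) = range Point"
    by (auto simp: node_levels elim: node_rank.elims)
  also have "\<dots> \<approx> (UNIV :: nat set set)"
    by (rule inj_on_image_eqpoll_self) (simp add: inj_on_def)
  also have "\<dots> \<approx> (UNIV :: real set)"
    by (rule nat_sets_eqpoll_reals)
  finally show ?thesis .
qed

theorem lemma3p2:
  shows "\<exists>(P :: real set) (r :: real rel).
     partial_order_on P r \<and>
     locally_countable P r \<and> P \<approx> (UNIV :: real set) \<and> has_height P r 3 \<and>
     level1 P r \<approx> (UNIV :: real set) \<and>
     (\<forall>A. A \<subseteq> level1 P r \<and> countable A \<longrightarrow>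
          (\<exists>u\<in>level2 P r. \<forall>a\<in>A. (a, u) \<in> r)) \<and>
     (\<forall>Q q. finite Q \<and> Q \<subseteq> level1 P r \<union> level2 P r \<and> q \<in> level2 P r \<and> q \<notin> Q \<longrightarrow>
          (\<exists>z\<in>level3 P r. (\<forall>x\<in>Q. (x, z) \<in> r) \<and> (q, z) \<notin> r))"
proof -
  obtain e :: "nat set node \<Rightarrow> real" where e: "inj e"
    using nat_set_node_embeds_into_real by blast
  let ?P = "range e" and ?r = "map_prod e e ` node_le"
  have "level1 ?P ?r \<approx> level1 UNIV (node_le :: nat set node rel)"
    unfolding level1_image[OF e]
    by (rule inj_on_image_eqpoll_self) (use e in \<open>simp add: inj_on_def\<close>)
  also note nat_set_node_level1_eqpoll_real
  finally have level1: "level1 ?P ?r \<approx> (UNIV :: real set)" .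
  moreover have "level1 ?P ?r \<subseteq> ?P"
    by (auto simp: level1_def)
  ultimately have "?P \<approx> (UNIV :: real set)"
    by (rule superset_eqpoll_UNIV)
  then show ?thesis
    using partial_order_on_image[OF e node_partial_order]
      locally_countable_image[OF e node_locally_countable] has_height_image[OF e node_height] level1
      countable_level1_bounded_image[OF e node_countable_level1_bounded]
      finite_separation_image[OF e node_finite_separation[OF empty_not_UNIV]]
    by blast
qed

end
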